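(* Let $A$ be a finite non-empty alphabet and $\mathbf a,\mathbf b,\mathbf c,\mathbf d\in A^+$. If $\mathbf a:\mathbf b::_{SY}\mathbf c:\mathbf d$, then $\mathbf a:\mathbf b::\mathbf c:\mathbf d$ holds in $(A^+,\cdot,A^+)$.
   Context: $A^+$ is the set of non-empty finite words over $A$. $\mathbf a:\mathbf b::_{SY}\mathbf c:\mathbf d$ means: $\mathbf a=a_1\ldots a_n$, $\mathbf b=b_1\ldots b_n$, $\mathbf c=c_1\ldots c_n$, $\mathbf d=d_1\ldots d_n$ for some letters $a_i,b_i,c_i,d_i\in A$ and $n\ge0$ such that for every $1\le i\le n$, ($a_i=b_i$ and $c_i=d_i$) or ($a_i=c_i$ and $b_i=d_i$). $(A^+,\cdot,A^+)$ is the algebra with universe $A^+$, concatenation, and every non-empty word as a constant. Terms are built from a denumerable variable set, concatenation and these constants; $X(s)$ is the set of variables of $s$. A justification is a pair $s\to t$ with $X(t)\subseteq X(s)$. $\uparrow(\mathbf a\to\mathbf b)$ is the set of justifications $s\to t$ with $\mathbf a=s(\mathbf o)$, $\mathbf b=t(\mathbf o)$ for some tuple $\mathbf o$ over $A^+$; $\uparrow(\mathbf a\to\mathbf b:\!\cdot\,\mathbf c\to\mathbf d):=\uparrow(\mathbf a\to\mathbf b)\cap\uparrow(\mathbf c\to\mathbf d)$. A justification is trivial if it lies in all sets $\uparrow(\mathbf a'\to\mathbf b':\!\cdot\,\mathbf c'\to\mathbf d')$. $\mathbf a\to\mathbf b:\!\cdot\,\mathbf c\to\mathbf d$ holds iff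 either (i) all justifications in $\uparrow(\mathbf a\to\mathbf b)\cup\uparrow(\mathbf c\to\mathbf d)$ are trivial, or (ii) $J_{\mathbf d}:=\uparrow(\mathbf a\to\mathbf b:\!\cdot\,\mathbf c\to\mathbf d)$ contains a non-trivial justification and for every $\mathbf d'$, $J_{\mathbf d}\subseteq J_{\mathbf d'}$ implies $J_{\mathbf d'}$ contains a non-trivial justification and $J_{\mathbf d'}\subseteq J_{\mathbf d}$ (ignoring trivial justifications). $\mathbf a:\mathbf b::\mathbf c:\mathbf d$ iff $\mathbf a\to\mathbf b:\!\cdot\,\mathbf c\to\mathbf d$, $\mathbf b\to\mathbf a:\!\cdot\,\mathbf d\to\mathbf c$, $\mathbf c\to\mathbf d:\!\cdot\,\mathbf a\to\mathbf b$, $\mathbf d\to\mathbf c:\!\cdot\,\mathbf b\to\mathbf a$ all hold. *)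

theory Defs
  imports Main
begin

text \<open>Terms over the algebra (A^+, concatenation, A^+): variables, constants
 (non-empty words) and concatenation. The alphabet A is the (finite) type 'a.\<close>

datatype 'a wterm = V nat | C "'a list" | Cat "'a wterm" "'a wterm"

fun wf_term :: "'a wterm \<Rightarrow> bool" where
  "wf_term (V x) = True"
| "wf_term (C w) = (w \<noteq> [])"
| "wf_term (Cat s t) = (wf_term s \<and> wf_term t)"

fun tvars :: "'a wterm \<Rightarrow> nat set" where
  "tvars (V x) = {x}"
| "tvars (C w) = {}"
| "tvars (Cat s t) = tvars s \<union> tvars t"

fun teval :: "(nat \<Rightarrow> 'a list) \<Rightarrow> 'a wterm \<Rightarrow> 'a list" where
  "teval \<sigma> (V x) = \<sigma> x"
| "teval \<sigma> (C w) = w"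
| "teval \<sigma> (Cat s t) = teval \<sigma> s @ teval \<sigma> t"

definition is_just :: "'a wterm \<times> 'a wterm \<Rightarrow> bool" where
  "is_just j = (wf_term (fst j) \<and> wf_term (snd j) \<and> tvars (snd j) \<subseteq> tvars (fst j))"

definition up :: "'a list \<Rightarrow> 'a list \<Rightarrow> ('a wterm \<times> 'a wterm) set" where
  "up a b = {(s, t). is_just (s, t) \<and>
     (\<exists>\<sigma>. (\<forall>x. \<sigma> x \<noteq> []) \<and> teval \<sigma> s = a \<and> teval \<sigma> t = b)}"

definition up2 :: "'a list \<Rightarrow> 'a list \<Rightarrow> 'a list \<Rightarrow> 'a list \<Rightarrow> ('a wterm \<times> 'a wterm) set" where
  "up2 a b c d = up a b \<inter> up c d"

definition trivial_just :: "'a wterm \<times> 'a wterm \<Rightarrow> bool" where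
  "trivial_just j = (\<forall>a' b' c' d'. a' \<noteq> [] \<and> b' \<noteq> [] \<and> c' \<noteq> [] \<and> d' \<noteq> []
       \<longrightarrow> j \<in> up2 a' b' c' d')"

definition nontriv :: "('a wterm \<times> 'a wterm) set \<Rightarrow> ('a wterm \<times> 'a wterm) set" where
  "nontriv J = {j \<in> J. \<not> trivial_just j}"

definition arrow_prop :: "'a list \<Rightarrow> 'a list \<Rightarrow> 'a list \<Rightarrow> 'a list \<Rightarrow> bool" where
  "arrow_prop a b c d =
    ((\<forall>j \<in> up a b \<union> up c d. trivial_just j) \<or>
     (nontriv (up2 a b c d) \<noteq> {} \<and>
      (\<forall>d'. d' \<noteq> [] \<longrightarrow> nontriv (up2 a b c d) \<subseteq> nontriv (up2 a b c d') \<longrightarrow>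
          nontriv (up2 a b c d') \<noteq> {} \<and> nontriv (up2 a b c d') \<subseteq> nontriv (up2 a b c d))))"

definition analogy :: "'a list \<Rightarrow> 'a list \<Rightarrow> 'a list \<Rightarrow> 'a list \<Rightarrow> bool" where
  "analogy a b c d = (arrow_prop a b c d \<and> arrow_prop b a d c \<and>
                      arrow_prop c d a b \<and> arrow_prop d c b a)"

definition sy_analogy :: "'a list \<Rightarrow> 'a list \<Rightarrow> 'a list \<Rightarrow> 'a list \<Rightarrow> bool" where
  "sy_analogy a b c d = (length b = length a \<and> length c = length a \<and> length d = length a \<and>
     (\<forall>i < length a. (a ! i = b ! i \<and> c ! i = d ! i) \<or> (a ! i = c ! i \<and> b ! i = d ! i)))"

end

theory Submission
  imports Defs
begin

text \<open>Let \<open>X\<close> be the set of positions \<open>i\<close> with \<open>a\<^sub>i = b\<^sub>i\<close> and \<open>c\<^sub>i = d\<^sub>i\<close>. The justification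
  \<open>s \<rightarrow> t\<close>, where \<open>s\<close> (resp. \<open>t\<close>) spells out \<open>a\<close> (resp. \<open>b\<close>) letter by letter but has a variable
  \<open>x\<^sub>i\<close> at each position \<open>i \<in> X\<close>, yields both \<open>a \<rightarrow> b\<close> and \<open>c \<rightarrow> d\<close>. Since \<open>s\<close> is a product of
  \<open>|c|\<close> factors, each matching a non-empty word, any match of \<open>s\<close> against \<open>c\<close> sends every \<open>x\<^sub>i\<close> to
  the single letter \<open>c\<^sub>i\<close>; so \<open>d\<close> is the only word \<open>d'\<close> with \<open>s \<rightarrow> t \<in> \<up>(c \<rightarrow> d')\<close>, which gives
  the maximality condition of \<open>a \<rightarrow> b :\<cdot> c \<rightarrow> d\<close>, and the same argument shows that \<open>s \<rightarrow> t\<close> is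
  not trivial. The three other arrows follow by the symmetries of \<open>::\<^sub>S\<^sub>Y\<close>.\<close>

lemma teval_cong: "(\<And>x. x \<in> tvars t \<Longrightarrow> \<sigma> x = \<tau> x) \<Longrightarrow> teval \<sigma> t = teval \<tau> t"
  by (induction t) auto

fun cat_list :: "'a wterm list \<Rightarrow> 'a wterm" where
  "cat_list [] = C []"
| "cat_list [t] = t"
| "cat_list (t # u # us) = Cat t (cat_list (u # us))"

lemma teval_cat_list: "ts \<noteq> [] \<Longrightarrow> teval \<sigma> (cat_list ts) = concat (map (teval \<sigma>) ts)"
  by (induction ts rule: cat_list.induct) auto

lemma tvars_cat_list: "tvars (cat_list ts) = \<Union> (tvars ` set ts)"
  by (induction ts rule: cat_list.induct) auto

lemma wf_term_cat_list: "ts \<noteq> [] \<Longrightarrow> wf_term (cat_list ts) = (\<forall>t\<in>set ts. wf_term t)"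
  by (induction ts rule: cat_list.induct) auto

lemma length_le_length_concat: "\<forall>xs\<in>set xss. xs \<noteq> [] \<Longrightarrow> length xss \<le> length (concat xss)"
  by (induction xss) (auto simp flip: length_greater_0_conv)

lemma concat_eq_length_imp_singletons:
  assumes "\<forall>xs\<in>set xss. xs \<noteq> []" and "length (concat xss) = length xss"
  shows "xss = map (\<lambda>x. [x]) (concat xss)"
  using assms
proof (induction xss)
  case Nil
  then show ?case by simp
next
  case (Cons xs xss)
  have "length xss \<le> length (concat xss)" "xs \<noteq> []"
    using Cons.prems(1) by (auto intro: length_le_length_concat)
  moreover have "1 \<le> length xs"
    using \<open>xs \<noteq> []\<close> by (simp add: Suc_le_eq)
  ultimately have "length xs = 1" "length (concat xss) = length xss"
    using Cons.prems(2) by simp_all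
  with Cons show ?case
    by (auto simp: length_Suc_conv)
qed

definition var_slot :: "nat set \<Rightarrow> 'a list \<Rightarrow> nat \<Rightarrow> 'a wterm" where
  "var_slot X w i = (if i \<in> X then V i else C [w ! i])"

definition pattern :: "nat set \<Rightarrow> 'a list \<Rightarrow> 'a wterm" where
  "pattern X w = cat_list (map (var_slot X w) [0..<length w])"

lemma wf_term_pattern: "w \<noteq> [] \<Longrightarrow> wf_term (pattern X w)"
  by (auto simp: pattern_def wf_term_cat_list var_slot_def)

lemma tvars_pattern: "tvars (pattern X w) = X \<inter> {..<length w}"
  by (auto simp: pattern_def tvars_cat_list var_slot_def split: if_splits)

lemma teval_pattern:
  "w \<noteq> [] \<Longrightarrow> teval \<sigma> (pattern X w) = concat (map (\<lambda>i. teval \<sigma> (var_slot X w i)) [0..<length w])"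
  by (simp add: pattern_def teval_cat_list comp_def)

lemma teval_pattern_letters_eq:
  assumes "w \<noteq> []" and "length v = length w"
    and "\<And>i. i < length w \<Longrightarrow> v ! i = (if i \<in> X then u ! i else w ! i)"
  shows "teval (\<lambda>i. [u ! i]) (pattern X w) = v"
proof -
  have "teval (\<lambda>i. [u ! i]) (var_slot X w i) = [if i \<in> X then u ! i else w ! i]" for i
    by (simp add: var_slot_def)
  then have "teval (\<lambda>i. [u ! i]) (pattern X w) = map (\<lambda>i. if i \<in> X then u ! i else w ! i) [0..<length w]"
    using assms(1) by (simp add: teval_pattern)
  also have "\<dots> = v"
    by (rule nth_equalityI) (simp_all add: assms(2,3))
  finally show ?thesis .
qed

lemma pattern_match_letters:
  assumes "w \<noteq> []" and ne: "\<forall>x. \<sigma> x \<noteq> []"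
    and len: "length (teval \<sigma> (pattern X w)) = length w"
    and "i \<in> X" and "i < length w"
  shows "\<sigma> i = [teval \<sigma> (pattern X w) ! i]"
proof -
  define xss where "xss = map (\<lambda>i. teval \<sigma> (var_slot X w i)) [0..<length w]"
  have concat: "concat xss = teval \<sigma> (pattern X w)"
    using \<open>w \<noteq> []\<close> by (simp add: xss_def teval_pattern)
  have "\<forall>xs\<in>set xss. xs \<noteq> []"
    using ne by (auto simp: xss_def var_slot_def)
  moreover have "length (concat xss) = length xss"
    using len concat by (simp add: xss_def)
  ultimately have "xss = map (\<lambda>x. [x]) (teval \<sigma> (pattern X w))"
    using concat_eq_length_imp_singletons concat by metis
  then have "xss ! i = [teval \<sigma> (pattern X w) ! i]"
    using len \<open>i < length w\<close> by simp
  then show ?thesis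
    using \<open>i \<in> X\<close> \<open>i < length w\<close> by (simp add: xss_def var_slot_def)
qed

lemma teval_pattern_determined:
  assumes "w \<noteq> []" and "length w' = length w" and "\<forall>x. \<sigma> x \<noteq> []"
    and "length (teval \<sigma> (pattern X w)) = length w"
  shows "teval \<sigma> (pattern X w') = teval (\<lambda>i. [teval \<sigma> (pattern X w) ! i]) (pattern X w')"
  using assms pattern_match_letters[of w \<sigma> X] by (intro teval_cong) (auto simp: tvars_pattern)

lemma arrow_prop_if_determining:
  assumes "j \<in> nontriv (up2 a b c d)" and "\<And>d'. j \<in> up c d' \<Longrightarrow> d' = d"
  shows "arrow_prop a b c d"
  unfolding arrow_prop_def
proof (intro disjI2 conjI allI impI)
  show "nontriv (up2 a b c d) \<noteq> {}"
    using assms(1) by blast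
  fix d' :: "'a list"
  assume "nontriv (up2 a b c d) \<subseteq> nontriv (up2 a b c d')"
  then have "d' = d"
    using assms unfolding nontriv_def up2_def by blast
  then show "nontriv (up2 a b c d') \<noteq> {}" "nontriv (up2 a b c d') \<subseteq> nontriv (up2 a b c d)"
    using assms(1) by auto
qed

lemma sy_analogy_swap_inner: "sy_analogy a b c d \<Longrightarrow> sy_analogy b a d c"
  by (auto simp: sy_analogy_def)

lemma sy_analogy_swap_ratios: "sy_analogy a b c d \<Longrightarrow> sy_analogy c d a b"
  by (auto simp: sy_analogy_def)

lemma sy_analogy_arrow_prop:
  assumes "a \<noteq> []" and sy: "sy_analogy a b c d"
  shows "arrow_prop a b c d"
proof -
  define X where "X = {i. a ! i = b ! i \<and> c ! i = d ! i}"
  have lens: "length b = length a" "length c = length a" "length d = length a"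
    and pos: "\<And>i. i < length a \<Longrightarrow> i \<in> X \<or> (a ! i = c ! i \<and> b ! i = d ! i)"
    using sy by (auto simp: sy_analogy_def X_def)
  have "b \<noteq> []"
    using lens \<open>a \<noteq> []\<close> by auto
  have s_a: "teval (\<lambda>i. [a ! i]) (pattern X a) = a"
    using \<open>a \<noteq> []\<close> by (rule teval_pattern_letters_eq) simp_all
  have t_b: "teval (\<lambda>i. [a ! i]) (pattern X b) = b"
    using \<open>b \<noteq> []\<close> by (rule teval_pattern_letters_eq) (simp_all add: X_def)
  have s_c: "teval (\<lambda>i. [c ! i]) (pattern X a) = c"
    using \<open>a \<noteq> []\<close> lens(2) by (rule teval_pattern_letters_eq) (auto dest: pos)
  have t_d: "teval (\<lambda>i. [c ! i]) (pattern X b) = d"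
    using \<open>b \<noteq> []\<close> by (rule teval_pattern_letters_eq) (use lens in \<open>auto simp: X_def dest: pos\<close>)
  define j where "j = (pattern X a, pattern X b)"
  have determined: "teval \<sigma> (pattern X b) = teval (\<lambda>i. [u ! i]) (pattern X b)"
    if "\<forall>x. \<sigma> x \<noteq> []" and "teval \<sigma> (pattern X a) = u" and "length u = length a" for \<sigma> u
    using teval_pattern_determined[of a b \<sigma> X] that \<open>a \<noteq> []\<close> lens(1) by simp
  have "is_just j"
    using \<open>a \<noteq> []\<close> \<open>b \<noteq> []\<close> lens by (simp add: is_just_def j_def wf_term_pattern tvars_pattern)
  then have "j \<in> up2 a b c d"
    using s_a t_b s_c t_d by (auto simp: up2_def up_def j_def)
  moreover have "\<not> trivial_just j"
  proof
    assume "trivial_just j"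
    moreover have "a @ a \<noteq> []"
      using \<open>a \<noteq> []\<close> by simp
    ultimately have "j \<in> up2 a (a @ a) a (a @ a)"
      using \<open>a \<noteq> []\<close> unfolding trivial_just_def by blast
    then have "j \<in> up a (a @ a)"
      by (simp add: up2_def)
    then obtain \<sigma> where "\<forall>x. \<sigma> x \<noteq> []" "teval \<sigma> (pattern X a) = a" "teval \<sigma> (pattern X b) = a @ a"
      by (auto simp: up_def j_def)
    then have "a @ a = b"
      using determined t_b by metis
    then have "length a + length a = length a"
      using lens(1) by (metis length_append)
    then show False
      using \<open>a \<noteq> []\<close> by simp
  qed
  moreover have "d' = d" if "j \<in> up c d'" for d'
  proof -
    from that obtain \<sigma> where "\<forall>x. \<sigma> x \<noteq> []" "teval \<sigma> (pattern X a) = c" "teval \<sigma> (pattern X b) = d'"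
      by (auto simp: up_def j_def)
    then show "d' = d"
      using determined t_d lens(2) by metis
  qed
  ultimately show ?thesis
    by (intro arrow_prop_if_determining[of j]) (auto simp: nontriv_def)
qed

theorem mainTheorem16:
  fixes a b c d :: "'a::finite list"
  assumes "a \<noteq> []" and "b \<noteq> []" and "c \<noteq> []" and "d \<noteq> []"
    and "sy_analogy a b c d"
  shows "analogy a b c d"
proof -
  have "sy_analogy b a d c" "sy_analogy c d a b" "sy_analogy d c b a"
    using assms(5) sy_analogy_swap_inner sy_analogy_swap_ratios by blast+
  then show ?thesis
    using assms sy_analogy_arrow_prop unfolding analogy_def by blast
qed

end
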